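(* The sub-set-operad $\mathrm{RWS}$ of $\mathrm{RW}$ generated by the four trees $A_\mu,A_\prec,A_\succ,A_\odot$ (together with the unit) consists exactly of the recursively labelled red and white trees: for every $n\ge1$, $\mathrm{RWS}(n)$ is the set of trees $T\in\mathrm{RW}(n)$ such that for every node $z$ of $T$, the union of the label sets of all nodes in the subtree rooted at $z$ is an interval of consecutive integers.
   Context: Labelled red and white trees: $\mathrm{RW}(n)$ is the set of finite rooted trees (children unordered) in which each node $z$ carries a possibly empty label set $L(z)\subseteq[n]$, the sets $L(z)$ partition $[n]$, and every node with empty label set has at least two children. A node with nonempty label set is white; a node with empty label set is red if all its children are white, white otherwise. Composition: for $T_1\in\mathrm{RW}(m)$, $T_2\in\mathrm{RW}(n)$, $x\in[m]$, relabel $T_1$ by $y\mapsto y+n-1$ for labels $y>x$ and $T_2$ by $y\mapsto y+x-1$; let $z$ be the node of $T_1$ containing $x$ and $r$ the root of $T_2$. (W) if $r$ is not red: remove $x$ from $L(z)$, add $L(r)$ to $L(z)$, make the children of $r$ children of $z$. (R1) if $r$ is red and $T_1$ is the single node $\{x\}$: result $T_2$. (R2) if $r$ is red and $z$ has a child or $|L(z)|\ge2$: remove $x$ from $L(z)$ and attach $T_2$ as a new child subtree of $z$. (R3) if $r$ is red, $z$ a non-root leaf with $L(z)=\{x\}$: delete $z$ and make the children of $r$ children of the parent of $z$. Colours are recomputed by the colouring rule. This makes $\mathrm{RW}$ a set-operad. The four generators in $\mathrm{RW}(2)$: $A_\mu$ = single node labelled $\{1,2\}$; $A_\prec$ = root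 $\{1\}$ with one child $\{2\}$; $A_\succ$ = root $\{2\}$ with one child $\{1\}$; $A_\odot$ = red root with empty label set and two children labelled $\{1\}$ and $\{2\}$. *)

theory Defs
  imports Main "HOL-Library.Multiset"
begin

datatype rwt = Node "nat set" "rwt multiset"

primrec root_labels :: "rwt \<Rightarrow> nat set" where
  "root_labels (Node L cs) = L"

primrec root_children :: "rwt \<Rightarrow> rwt multiset" where
  "root_children (Node L cs) = cs"

primrec subtrees :: "rwt \<Rightarrow> rwt set" where
  "subtrees (Node L cs) = insert (Node L cs) (\<Union> (set_mset (image_mset subtrees cs)))"

primrec label_union :: "rwt \<Rightarrow> nat set" where
  "label_union (Node L cs) = L \<union> \<Union> (set_mset (image_mset label_union cs))"

primrec label_mset :: "rwt \<Rightarrow> nat multiset" where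
  "label_mset (Node L cs) = mset_set L + sum_mset (image_mset label_mset cs)"

primrec red :: "rwt \<Rightarrow> bool" where
  "red (Node L cs) = (L = {} \<and> (\<forall>b \<in># image_mset red cs. \<not> b))"

text \<open>RW(n): label sets finite, they partition [n] (every element of {1..n}
  occurs in exactly one node, nothing else occurs), and every node with empty
  label set has at least two children.\<close>
definition RW :: "nat \<Rightarrow> rwt \<Rightarrow> bool" where
  "RW n T \<longleftrightarrow>
     (\<forall>S \<in> subtrees T. finite (root_labels S) \<and>
          (root_labels S = {} \<longrightarrow> size (root_children S) \<ge> 2)) \<and>
     label_mset T = mset_set {1..n}"

primrec relab :: "(nat \<Rightarrow> nat) \<Rightarrow> rwt \<Rightarrow> rwt" where
  "relab f (Node L cs) = Node (f ` L) (image_mset (relab f) cs)"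

text \<open>Grafting the (already relabelled) tree T2 at label x of a (relabelled)
  tree, following rules (W), (R1), (R2), (R3).  Rule (R3) is applied at the
  parent of the leaf {x}; rule (R1) is the case where the node containing x is
  a leaf labelled {x} that has no parent.\<close>
primrec graft :: "nat \<Rightarrow> rwt \<Rightarrow> rwt \<Rightarrow> rwt" where
  "graft x T2 (Node L cs) =
     (if x \<in> L then
        (if \<not> red T2 then Node ((L - {x}) \<union> root_labels T2) (cs + root_children T2)
         else if L = {x} \<and> cs = {#} then T2
         else Node (L - {x}) (add_mset T2 cs))
      else if red T2 \<and> Node {x} {#} \<in># cs then
        Node L (cs - {# Node {x} {#} #} + root_children T2)
      else Node L (image_mset (graft x T2) cs))"

definition comp :: "nat \<Rightarrow> nat \<Rightarrow> rwt \<Rightarrow> rwt \<Rightarrow> rwt" where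
  "comp n x T1 T2 =
     graft x (relab (\<lambda>y. y + x - 1) T2)
             (relab (\<lambda>y. if y > x then y + n - 1 else y) T1)"

definition A_mu :: rwt where "A_mu = Node {1,2} {#}"
definition A_prec :: rwt where "A_prec = Node {1} {# Node {2} {#} #}"
definition A_succ :: rwt where "A_succ = Node {2} {# Node {1} {#} #}"
definition A_odot :: rwt where "A_odot = Node {} {# Node {1} {#}, Node {2} {#} #}"

text \<open>The (non-symmetric) sub-set-operad RWS generated by the unit and the four
  generators: the smallest family closed under all partial compositions.\<close>
inductive RWS :: "nat \<Rightarrow> rwt \<Rightarrow> bool" where
  unit: "RWS 1 (Node {1} {#})"
| mu: "RWS 2 A_mu"
| prec: "RWS 2 A_prec"
| succ: "RWS 2 A_succ"
| odot: "RWS 2 A_odot"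
| compose: "\<lbrakk>RWS m T1; RWS n T2; 1 \<le> x; x \<le> m\<rbrakk> \<Longrightarrow> RWS (m + n - 1) (comp n x T1 T2)"

definition recursively_labelled :: "rwt \<Rightarrow> bool" where
  "recursively_labelled T \<longleftrightarrow> (\<forall>S \<in> subtrees T. \<exists>a b. label_union S = {a..b})"

end

theory Submission
  imports Defs
begin

text \<open>
  Partial composition preserves both conditions: grafting \<open>T\<^sub>2\<close> at the label \<open>x\<close> of
  \<open>T\<^sub>1\<close> replaces \<open>x\<close> by the interval of labels of \<open>T\<^sub>2\<close>, and shifting the labels of
  \<open>T\<^sub>1\<close> above \<open>x\<close> maps intervals to intervals. Hence every tree of RWS is recursively
  labelled.

  Conversely, a recursively labelled tree with \<open>n \<ge> 2\<close> labels is split according to the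
  position of its largest label \<open>n\<close>. If the root carries both \<open>n\<close> and \<open>n - 1\<close>, the tree
  is \<open>T' \<circ>\<^bsub>n - 1\<^esub> A\<^sub>\<mu>\<close>. Otherwise the child containing \<open>n - 1\<close> (resp. \<open>n\<close>) carries an
  interval \<open>{a..n-1}\<close> (resp. \<open>{a..n}\<close>); pruning it and normalising its labels exhibits the
  tree as a composition at \<open>a\<close> of two trees with fewer labels. When \<open>a = 1\<close>, or when that
  child is the leaf \<open>{n}\<close>, the tree is instead a composition at \<open>1\<close> of \<open>A\<^sub>\<mu>\<close>,
  \<open>A\<^sub>\<prec>\<close>, \<open>A\<^sub>\<succ>\<close> or \<open>A\<^sub>\<odot>\<close> with a tree with \<open>n - 1\<close> labels, the generator
  being dictated by the colours.
\<close>

section \<open>Label multisets of well-formed trees\<close>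

definition wf_rwt :: "rwt \<Rightarrow> bool" where
  "wf_rwt T \<longleftrightarrow> (\<forall>S \<in> subtrees T. finite (root_labels S) \<and>
     (root_labels S = {} \<longrightarrow> size (root_children S) \<ge> 2))"

lemma wf_rwt_Node [simp]:
  "wf_rwt (Node L cs) \<longleftrightarrow> finite L \<and> (L = {} \<longrightarrow> size cs \<ge> 2) \<and> (\<forall>c\<in>#cs. wf_rwt c)"
  unfolding wf_rwt_def by auto

lemma RW_iff: "RW n T \<longleftrightarrow> wf_rwt T \<and> label_mset T = mset_set {1..n}"
  unfolding RW_def wf_rwt_def by simp

lemma label_union_eq_set_label_mset: "wf_rwt T \<Longrightarrow> label_union T = set_mset (label_mset T)"
  by (induction T) auto

lemma set_sum_label_mset:
  "\<forall>c\<in>#cs. wf_rwt c \<Longrightarrow> set_mset (\<Sum>\<^sub># (image_mset label_mset cs)) = \<Union> (label_union ` set_mset cs)"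
  by (induction cs) (auto simp: label_union_eq_set_label_mset)

lemma label_union_nonempty: "wf_rwt T \<Longrightarrow> label_union T \<noteq> {}"
proof (induction T)
  case (Node L cs)
  show ?case
  proof (cases "L = {}")
    case True
    with Node.prems have "cs \<noteq> {#}" by auto
    then obtain c where "c \<in># cs" by blast
    with Node show ?thesis by auto
  qed simp
qed

lemma label_mset_nonempty: "wf_rwt T \<Longrightarrow> label_mset T \<noteq> {#}"
  using label_union_nonempty label_union_eq_set_label_mset by fastforce

lemma RW_imp_ge_1: "RW n T \<Longrightarrow> n \<ge> 1"
  unfolding RW_iff using label_mset_nonempty by (cases n) auto

lemma size_label_mset_sum:
  "\<forall>c\<in>#cs. wf_rwt c \<Longrightarrow> size (\<Sum>\<^sub># (image_mset label_mset cs)) \<ge> size cs"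
proof (induction cs)
  case (add c cs)
  have "size (label_mset c) \<ge> 1"
    using label_mset_nonempty add.prems by (simp add: Suc_le_eq nonempty_has_size)
  with add show ?case by simp
qed simp

lemma leaf_if_size_label_mset_1:
  assumes "wf_rwt T" "size (label_mset T) = 1"
  shows "\<exists>y. T = Node {y} {#}"
proof (cases T)
  case (Node L cs)
  let ?k = "size (\<Sum>\<^sub># (image_mset label_mset cs))"
  from assms Node have fin: "finite L" and sz: "card L + ?k = 1" and "size cs \<le> ?k"
    and "L = {} \<longrightarrow> size cs \<ge> 2"
    using size_label_mset_sum[of cs] by auto
  then have "L \<noteq> {}" by auto
  with fin have "card L \<ge> 1" by (simp add: Suc_le_eq card_gt_0_iff)
  with sz \<open>size cs \<le> ?k\<close> have "card L = 1" "size cs = 0" by linarith+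
  with Node show ?thesis by (auto simp: card_1_singleton_iff)
qed

lemma mset_set_set_mset_if_count_le_1:
  assumes "\<And>y. count M y \<le> 1"
  shows "mset_set (set_mset M) = M"
proof (rule multiset_eqI)
  fix y
  show "count (mset_set (set_mset M)) y = count M y"
  proof (cases "y \<in># M")
    case True
    then have "count M y \<noteq> 0" using not_in_iff by metis
    then have "count M y = 1" using assms[of y] by linarith
    with True show ?thesis by simp
  qed (simp add: not_in_iff)
qed

lemma plus_eq_mset_setD:
  assumes "A + B = mset_set S" "finite S"
  shows "A = mset_set (set_mset A)" "B = mset_set (set_mset B)"
    and "set_mset A \<inter> set_mset B = {}" "set_mset A \<union> set_mset B = S"
proof -
  have count: "count A y + count B y \<le> 1" for y
    using arg_cong[OF assms(1), of "\<lambda>M. count M y"] by (simp add: count_mset_set')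
  have "count A y \<le> 1" "count B y \<le> 1" for y using count[of y] by linarith+
  then show "A = mset_set (set_mset A)" "B = mset_set (set_mset B)"
    using mset_set_set_mset_if_count_le_1 by metis+
  have False if "y \<in># A" "y \<in># B" for y
  proof -
    from that have "0 < count A y" "0 < count B y" by simp_all
    with count[of y] show False by linarith
  qed
  then show "set_mset A \<inter> set_mset B = {}" by blast
  show "set_mset A \<union> set_mset B = S"
    using arg_cong[OF assms(1), of set_mset] assms(2) by simp
qed

lemma obtain_child_containing_label:
  assumes "x \<in> label_union (Node L cs)" "x \<notin> L"
  obtains c rest where "cs = add_mset c rest" "x \<in> label_union c"
  using assms by (auto dest!: multi_member_split)

lemma mem_label_union_if_count: "wf_rwt T \<Longrightarrow> count (label_mset T) x = 1 \<Longrightarrow> x \<in> label_union T"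
  by (simp add: label_union_eq_set_label_mset count_inI)

lemma label_in_root_not_in_children:
  assumes "wf_rwt (Node L cs)" "count (label_mset (Node L cs)) x = 1" "x \<in> L"
  shows "\<forall>c\<in>#cs. x \<notin> label_union c"
proof -
  from assms have "count (\<Sum>\<^sub># (image_mset label_mset cs)) x = 0" by simp
  then have "x \<notin># \<Sum>\<^sub># (image_mset label_mset cs)" by (simp only: not_in_iff)
  with assms(1) show ?thesis by (auto simp: label_union_eq_set_label_mset)
qed

lemma label_in_child_not_elsewhere:
  assumes "wf_rwt (Node L cs)" "count (label_mset (Node L cs)) x = 1"
    and "cs = add_mset c rest" "x \<in> label_union c"
  shows "x \<notin> L" "count (label_mset c) x = 1" "\<forall>d\<in>#rest. x \<notin> label_union d"
proof -
  have "x \<in># label_mset c"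
    using assms(1,3,4) by (simp add: label_union_eq_set_label_mset)
  then have c1: "count (label_mset c) x \<ge> 1" by (simp add: Suc_le_eq)
  have fin: "finite L" using assms(1) by simp
  have sum: "(if x \<in> L then 1 else 0) + count (label_mset c) x
      + count (\<Sum>\<^sub># (image_mset label_mset rest)) x = 1"
    using assms(2,3) fin by (simp add: count_mset_set')
  with c1 have "(if x \<in> L then 1 else 0) = (0::nat)" "count (label_mset c) x = 1"
    and rest0: "count (\<Sum>\<^sub># (image_mset label_mset rest)) x = 0" by linarith+
  then show "x \<notin> L" "count (label_mset c) x = 1" by (simp_all split: if_splits)
  from rest0 have "x \<notin># \<Sum>\<^sub># (image_mset label_mset rest)" by (simp only: not_in_iff)
  with assms(1,3) show "\<forall>d\<in>#rest. x \<notin> label_union d"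
    by (auto simp: label_union_eq_set_label_mset)
qed

lemma obtain_child_with_single_label:
  assumes "wf_rwt (Node L cs)" "count (label_mset (Node L cs)) x = 1" "x \<notin> L"
  obtains c rest where "cs = add_mset c rest" "count (label_mset c) x = 1"
    and "\<forall>d\<in>#rest. x \<notin> label_union d"
proof -
  from assms(1,2) have "x \<in> label_union (Node L cs)" by (rule mem_label_union_if_count)
  then obtain c rest where cs: "cs = add_mset c rest" and "x \<in> label_union c"
    using assms(3) by (rule obtain_child_containing_label)
  with assms(1,2) show thesis using that label_in_child_not_elsewhere by blast
qed

lemma label_sets_of_child_split:
  assumes "wf_rwt (Node L cs)" "label_mset (Node L cs) = mset_set S" "finite S"
    and "cs = add_mset c rest"
  defines "R \<equiv> \<Union> (label_union ` set_mset rest)"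
  shows "label_mset c = mset_set (label_union c)" "\<Sum>\<^sub># (image_mset label_mset rest) = mset_set R"
    and "L \<inter> label_union c = {}" "L \<inter> R = {}" "label_union c \<inter> R = {}"
    and "L \<union> label_union c \<union> R = S" "finite R"
proof -
  have wc: "wf_rwt c" and wr: "\<forall>d\<in>#rest. wf_rwt d" and fL: "finite L"
    using assms(1,4) by auto
  have sum_rest: "set_mset (\<Sum>\<^sub># (image_mset label_mset rest)) = R"
    unfolding R_def using wr by (rule set_sum_label_mset)
  have lc: "label_union c = set_mset (label_mset c)"
    using wc by (rule label_union_eq_set_label_mset)
  have "mset_set L + (label_mset c + \<Sum>\<^sub># (image_mset label_mset rest)) = mset_set S"
    using assms(2,4) by (simp add: add.assoc)
  note root = plus_eq_mset_setD[OF this assms(3)]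
  note children = plus_eq_mset_setD[OF root(2) finite_set_mset]
  show "label_mset c = mset_set (label_union c)" "\<Sum>\<^sub># (image_mset label_mset rest) = mset_set R"
    using children(1,2) lc sum_rest by simp_all
  show "L \<inter> label_union c = {}" "L \<inter> R = {}" "L \<union> label_union c \<union> R = S"
    using root(3,4) fL lc sum_rest by auto
  show "label_union c \<inter> R = {}" using children(3) lc sum_rest by simp
  show "finite R" using sum_rest finite_set_mset by metis
qed

section \<open>Intervals and relabelling\<close>

definition is_interval :: "nat set \<Rightarrow> bool" where
  "is_interval A \<longleftrightarrow> (\<exists>a b. A = {a..b})"

lemma is_interval_atLeastAtMost [simp]: "is_interval {a..b}"
  unfolding is_interval_def by blast

lemma is_interval_empty [simp]: "is_interval {}"
  using is_interval_atLeastAtMost[of 1 0] by simp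

lemma is_interval_singleton [simp]: "is_interval {a}"
  using is_interval_atLeastAtMost[of a a] by simp

lemma recursively_labelled_Node [simp]:
  "recursively_labelled (Node L cs) \<longleftrightarrow>
     is_interval (label_union (Node L cs)) \<and> (\<forall>c\<in>#cs. recursively_labelled c)"
  unfolding recursively_labelled_def is_interval_def by auto

lemma recursively_labelled_iff:
  "recursively_labelled T \<longleftrightarrow>
     is_interval (label_union T) \<and> (\<forall>c\<in>#root_children T. recursively_labelled c)"
  by (cases T) simp

lemma relab_relab: "relab f (relab g T) = relab (f \<circ> g) T"
  by (induction T) (auto simp: image_comp multiset.map_comp intro!: image_mset_cong)

lemma relab_ident: "(\<And>y. y \<in> label_union T \<Longrightarrow> f y = y) \<Longrightarrow> relab f T = T"
proof (induction T)
  case (Node L cs)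
  have "image_mset (relab f) cs = image_mset id cs"
    by (rule image_mset_cong) (use Node in auto)
  with Node.prems show ?case by simp
qed

lemma label_union_relab: "label_union (relab f T) = f ` label_union T"
  by (induction T) (auto simp: image_Union)

lemma wf_rwt_relab: "wf_rwt T \<Longrightarrow> wf_rwt (relab f T)"
  by (induction T) auto

lemma image_mset_sum_mset: "image_mset f (\<Sum>\<^sub># M) = \<Sum>\<^sub># (image_mset (image_mset f) M)"
  by (induction M) auto

lemma label_mset_relab:
  "wf_rwt T \<Longrightarrow> inj_on f (label_union T) \<Longrightarrow> label_mset (relab f T) = image_mset f (label_mset T)"
proof (induction T)
  case (Node L cs)
  have "label_mset (relab f c) = image_mset f (label_mset c)" if "c \<in># cs" for c
    using Node that by (auto intro: inj_on_subset)
  then have "image_mset (label_mset \<circ> relab f) cs = image_mset (image_mset f \<circ> label_mset) cs"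
    by (auto intro: image_mset_cong)
  moreover have "inj_on f L" using Node.prems by (auto intro: inj_on_subset)
  ultimately show ?case
    using Node.prems by (simp add: image_mset_mset_set multiset.map_comp image_mset_sum_mset)
qed

lemma recursively_labelled_relab:
  assumes "recursively_labelled T"
    and "\<And>A. A \<subseteq> label_union T \<Longrightarrow> is_interval A \<Longrightarrow> is_interval (f ` A)"
  shows "recursively_labelled (relab f T)"
  using assms
proof (induction T)
  case (Node L cs)
  have "recursively_labelled (relab f c)" if "c \<in># cs" for c
  proof (rule Node.IH[OF that])
    show "recursively_labelled c" using Node.prems(1) that by simp
    have "label_union c \<subseteq> label_union (Node L cs)" using that by auto
    then show "is_interval (f ` A)" if "A \<subseteq> label_union c" "is_interval A" for A
      using Node.prems(2) that by blast
  qed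
  then have "\<forall>c\<in>#root_children (relab f (Node L cs)). recursively_labelled c" by auto
  moreover have "is_interval (label_union (relab f (Node L cs)))"
    unfolding label_union_relab using Node.prems by auto
  ultimately show ?case using recursively_labelled_iff by blast
qed

lemma recursively_labelled_shift_up:
  "recursively_labelled T \<Longrightarrow> recursively_labelled (relab (\<lambda>y. y + d) T)"
proof (rule recursively_labelled_relab)
  fix A :: "nat set" assume "is_interval A"
  then obtain a b where "A = {a..b}" unfolding is_interval_def by blast
  then have "(\<lambda>y. y + d) ` A = {a + d..b + d}" by simp
  then show "is_interval ((\<lambda>y. y + d) ` A)" by simp
qed

lemma image_minus_const_atLeastAtMost_nat:
  fixes d :: nat
  assumes "d \<le> a" "a \<le> b"
  shows "(\<lambda>y. y - d) ` {a..b} = {a - d..b - d}"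
proof -
  have eq: "{a..b} = (\<lambda>y. y + d) ` {a - d..b - d}"
    using assms by simp
  show ?thesis unfolding eq image_image by simp
qed

lemma recursively_labelled_shift_down:
  assumes "recursively_labelled T" "\<forall>y\<in>label_union T. d \<le> y"
  shows "recursively_labelled (relab (\<lambda>y. y - d) T)"
proof (rule recursively_labelled_relab[OF assms(1)])
  fix A assume "A \<subseteq> label_union T" "is_interval A"
  then obtain a b where A: "A = {a..b}" and "a \<le> b \<longrightarrow> d \<le> a"
    using assms(2) unfolding is_interval_def by fastforce
  then show "is_interval ((\<lambda>y. y - d) ` A)"
    by (cases "a \<le> b") (simp_all add: image_minus_const_atLeastAtMost_nat)
qed

section \<open>Grafting\<close>

lemma graft_unchanged: "x \<notin> label_union S \<Longrightarrow> graft x T2 S = S"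
proof (induction S)
  case (Node L cs)
  then have "image_mset (graft x T2) cs = image_mset id cs"
    by (intro image_mset_cong) auto
  moreover have "Node {x} {#} \<notin># cs" using Node.prems by force
  ultimately show ?case using Node.prems by simp
qed

lemma graft_mset_unchanged:
  "\<forall>d\<in>#cs. x \<notin> label_union d \<Longrightarrow> image_mset (graft x T2) cs = cs"
  using graft_unchanged image_mset_cong[of cs "graft x T2" id] by simp

lemma graft_into_child:
  assumes "x \<notin> L" "\<not> (red T2 \<and> Node {x} {#} \<in># cs)" "cs = add_mset c rest"
    and "\<forall>d\<in>#rest. x \<notin> label_union d"
  shows "graft x T2 (Node L cs) = Node L (add_mset (graft x T2 c) rest)"
proof -
  have "graft x T2 (Node L cs) = Node L (image_mset (graft x T2) cs)" using assms(1,2) by auto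
  also have "\<dots> = Node L (add_mset (graft x T2 c) rest)"
    using assms(3) graft_mset_unchanged[OF assms(4)] by simp
  finally show ?thesis .
qed

lemma wf_rwt_graft: "wf_rwt S \<Longrightarrow> wf_rwt T2 \<Longrightarrow> wf_rwt (graft x T2 S)"
proof (induction S)
  case (Node L cs)
  obtain L2 cs2 where T2: "T2 = Node L2 cs2" by (cases T2)
  show ?case
  proof (cases "x \<in> L")
    case True
    with Node.prems T2 show ?thesis
      by (cases "red T2"; cases "L - {x} = {}"; cases cs) (auto simp: add_increasing)
  next
    case xL: False
    show ?thesis
    proof (cases "red T2 \<and> Node {x} {#} \<in># cs")
      case True
      then obtain rest where "cs = add_mset (Node {x} {#}) rest" by (blast dest: multi_member_split)
      moreover have "size cs2 \<ge> 2" using Node.prems(2) True T2 by simp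
      ultimately show ?thesis using Node.prems xL True T2 by auto
    next
      case False
      with Node xL show ?thesis by auto
    qed
  qed
qed

lemma label_mset_graft:
  assumes "wf_rwt S" "wf_rwt T2" "count (label_mset S) x = 1"
    and "label_union S \<inter> label_union T2 \<subseteq> {x}"
  shows "label_mset (graft x T2 S) = label_mset S - {#x#} + label_mset T2"
  using assms
proof (induction S)
  case (Node L cs)
  obtain L2 cs2 where T2: "T2 = Node L2 cs2" by (cases T2)
  have fin: "finite L" "finite L2" using Node.prems T2 by auto
  show ?case
  proof (cases "x \<in> L")
    case True
    have LM: "label_mset (Node L cs) - {#x#} = mset_set (L - {x}) + \<Sum>\<^sub># (image_mset label_mset cs)"
      using True fin by (simp add: mset_set.remove)
    have "(L - {x}) \<inter> L2 = {}" using Node.prems(4) T2 by auto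
    with True T2 fin show ?thesis
      unfolding LM by (cases "red T2"; cases "L = {x} \<and> cs = {#}") (auto simp: mset_set_Union)
  next
    case xL: False
    show ?thesis
    proof (cases "red T2 \<and> Node {x} {#} \<in># cs")
      case True
      then obtain rest where "cs = add_mset (Node {x} {#}) rest" by (blast dest: multi_member_split)
      with True xL T2 show ?thesis by simp
    next
      case False
      obtain c rest where cs: "cs = add_mset c rest" and c1: "count (label_mset c) x = 1"
        and avoid: "\<forall>d\<in>#rest. x \<notin> label_union d"
        using Node.prems(1,3) xL by (rule obtain_child_with_single_label)
      have "c \<in># cs" using cs by simp
      then have IH: "label_mset (graft x T2 c) = label_mset c - {#x#} + label_mset T2"
        using Node.IH Node.prems c1 by auto
      obtain M where "label_mset c = add_mset x M"
        using c1 by (metis count_inI multi_member_split zero_neq_one)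
      with graft_into_child[OF xL False cs avoid] cs IH show ?thesis by simp
    qed
  qed
qed

lemma label_union_graft:
  assumes "wf_rwt S" "wf_rwt T2" "count (label_mset S) x = 1"
    and "label_union S \<inter> label_union T2 \<subseteq> {x}"
  shows "label_union (graft x T2 S) = (label_union S - {x}) \<union> label_union T2"
proof -
  obtain M where "label_mset S = add_mset x M"
    using assms(3) by (metis count_inI multi_member_split zero_neq_one)
  with assms(3) have "set_mset (label_mset S - {#x#}) = set_mset (label_mset S) - {x}"
    by (auto simp: count_eq_zero_iff)
  then show ?thesis
    using assms label_mset_graft[OF assms] wf_rwt_graft[OF assms(1,2)]
    by (simp add: label_union_eq_set_label_mset)
qed

definition intervals_after_subst :: "nat \<Rightarrow> nat set \<Rightarrow> rwt \<Rightarrow> bool" where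
  "intervals_after_subst x U T \<longleftrightarrow> (\<forall>S \<in> subtrees T.
     is_interval (if x \<in> label_union S then (label_union S - {x}) \<union> U else label_union S))"

lemma intervals_after_subst_Node:
  "intervals_after_subst x U (Node L cs) \<longleftrightarrow>
     is_interval (if x \<in> label_union (Node L cs) then (label_union (Node L cs) - {x}) \<union> U
                  else label_union (Node L cs)) \<and>
     (\<forall>c\<in>#cs. intervals_after_subst x U c)"
  unfolding intervals_after_subst_def by (auto simp del: label_union.simps)

lemma recursively_labelled_if_intervals_after_subst:
  "x \<notin> label_union T \<Longrightarrow> intervals_after_subst x U T \<Longrightarrow> recursively_labelled T"
  by (induction T) (auto simp: intervals_after_subst_Node)

lemma recursively_labelled_graft:
  assumes "wf_rwt S" "wf_rwt T2" "recursively_labelled T2" "count (label_mset S) x = 1"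
    and "label_union S \<inter> label_union T2 \<subseteq> {x}" "intervals_after_subst x (label_union T2) S"
  shows "recursively_labelled (graft x T2 S)"
  using assms
proof (induction S)
  case (Node L cs)
  obtain L2 cs2 where T2: "T2 = Node L2 cs2" by (cases T2)
  have x: "x \<in> label_union (Node L cs)" using Node.prems(1,4) by (rule mem_label_union_if_count)
  have "is_interval (label_union (graft x T2 (Node L cs)))"
    unfolding label_union_graft[OF Node.prems(1,2,4,5)]
    using Node.prems(6) x by (simp add: intervals_after_subst_Node del: label_union.simps)
  moreover have rl_cs2: "\<forall>c\<in>#cs2. recursively_labelled c" using Node.prems(3) T2 by simp
  have rl_avoiding: "recursively_labelled c" if "c \<in># cs" "x \<notin> label_union c" for c
    using that Node.prems(6) recursively_labelled_if_intervals_after_subst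
    by (auto simp: intervals_after_subst_Node)
  have "\<forall>c\<in>#root_children (graft x T2 (Node L cs)). recursively_labelled c"
  proof (cases "x \<in> L")
    case True
    note avoid = label_in_root_not_in_children[OF Node.prems(1,4) True]
    with True rl_cs2 rl_avoiding Node.prems(3) T2 show ?thesis by auto
  next
    case xL: False
    show ?thesis
    proof (cases "red T2 \<and> Node {x} {#} \<in># cs")
      case True
      then obtain rest where cs: "cs = add_mset (Node {x} {#}) rest"
        by (blast dest: multi_member_split)
      note avoid = label_in_child_not_elsewhere(3)[OF Node.prems(1,4) cs]
      with True xL cs rl_cs2 rl_avoiding T2 show ?thesis by auto
    next
      case False
      obtain c rest where cs: "cs = add_mset c rest" and c1: "count (label_mset c) x = 1"
        and avoid: "\<forall>d\<in>#rest. x \<notin> label_union d"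
        using Node.prems(1,4) xL by (rule obtain_child_with_single_label)
      have "c \<in># cs" using cs by simp
      with Node.IH Node.prems c1 have "recursively_labelled (graft x T2 c)"
        by (auto simp: intervals_after_subst_Node)
      with graft_into_child[OF xL False cs avoid] cs avoid rl_avoiding show ?thesis by auto
    qed
  qed
  ultimately show ?case using recursively_labelled_iff by blast
qed

section \<open>Partial composition preserves recursive labelling\<close>

definition shift_above :: "nat \<Rightarrow> nat \<Rightarrow> nat \<Rightarrow> nat" where
  "shift_above k x y = (if y > x then y + k - 1 else y)"

lemma comp_eq_graft:
  "1 \<le> x \<Longrightarrow> comp k x T1 T2 = graft x (relab (\<lambda>y. y + (x - 1)) T2) (relab (shift_above k x) T1)"
  unfolding comp_def shift_above_def by (simp add: add_diff_eq)

lemma inj_shift_above: "k \<ge> 1 \<Longrightarrow> inj (shift_above k x)"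
  unfolding shift_above_def inj_def by (auto split: if_splits)

lemma image_shift_above_below: "q \<le> x \<Longrightarrow> shift_above k x ` {p..q} = {p..q}"
  by (auto simp: shift_above_def)

lemma image_shift_above_above:
  assumes "k \<ge> 1" "x < p"
  shows "shift_above k x ` {p..q} = {p + k - 1..q + k - 1}"
proof -
  have "shift_above k x ` {p..q} = (\<lambda>y. y + (k - 1)) ` {p..q}"
    using assms by (intro image_cong) (auto simp: shift_above_def)
  also have "\<dots> = {p + (k - 1)..q + (k - 1)}" by (rule image_add_atLeastAtMost')
  finally show ?thesis using assms(1) by simp
qed

lemma image_shift_above_across:
  assumes "k \<ge> 1" "p \<le> x" "x \<le> q"
  shows "shift_above k x ` {p..q} = {p..x} \<union> {x + k..q + k - 1}"
proof -
  have "{p..q} = {p..x} \<union> {x + 1..q}" using assms(2,3) by auto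
  then show ?thesis
    using image_shift_above_below[of x x k p] image_shift_above_above[OF assms(1), of x "x + 1" q]
    by (simp add: image_Un)
qed

lemma intervals_after_subst_shift_above:
  assumes "k \<ge> 1" "recursively_labelled T"
  shows "intervals_after_subst x {x..x + k - 1} (relab (shift_above k x) T)"
  using assms(2)
proof (induction T)
  case (Node L cs)
  obtain p q where pq: "label_union (Node L cs) = {p..q}"
    using Node.prems unfolding recursively_labelled_Node is_interval_def by blast
  let ?A = "shift_above k x ` {p..q}"
  have "is_interval (if x \<in> ?A then (?A - {x}) \<union> {x..x + k - 1} else ?A)"
  proof -
    consider "q < x" | "x < p" | "p \<le> x" "x \<le> q" by linarith
    then show ?thesis
    proof cases
      case 1
      then show ?thesis using image_shift_above_below[of q x k p] by simp
    next
      case 2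
      then have "?A = {p + k - 1..q + k - 1}" "x \<notin> ?A"
        using image_shift_above_above[OF assms(1) 2, of q] assms(1) by auto
      then show ?thesis by (simp only: if_False) simp
    next
      case 3
      then have "x \<in> ?A" "(?A - {x}) \<union> {x..x + k - 1} = {p..q + k - 1}"
        using image_shift_above_across[OF assms(1) 3] assms(1) by auto
      then show ?thesis by simp
    qed
  qed
  moreover have "\<forall>c\<in>#cs. intervals_after_subst x {x..x + k - 1} (relab (shift_above k x) c)"
    using Node by simp
  moreover have "label_union (relab (shift_above k x) (Node L cs)) = ?A"
    unfolding label_union_relab pq ..
  ultimately show ?case
    unfolding relab.simps intervals_after_subst_Node by (simp split: if_split_asm)
qed

lemma comp_graft_conditions:
  assumes "RW m T1" "RW k T2" "1 \<le> x" "x \<le> m"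
  defines "S1 \<equiv> relab (shift_above k x) T1" and "S2 \<equiv> relab (\<lambda>y. y + (x - 1)) T2"
  shows "wf_rwt S1" "wf_rwt S2" "count (label_mset S1) x = 1"
    and "label_union S1 \<inter> label_union S2 \<subseteq> {x}" "label_union S2 = {x..x + k - 1}"
    and "label_mset S1 - {#x#} + label_mset S2 = mset_set {1..m + k - 1}"
proof -
  have k: "k \<ge> 1" using assms(2) by (rule RW_imp_ge_1)
  have w1: "wf_rwt T1" and w2: "wf_rwt T2"
    and L1: "label_mset T1 = mset_set {1..m}" and L2: "label_mset T2 = mset_set {1..k}"
    using assms(1,2) unfolding RW_iff by auto
  show ws1: "wf_rwt S1" and ws2: "wf_rwt S2" unfolding S1_def S2_def using w1 w2 wf_rwt_relab by auto
  let ?A = "shift_above k x ` {1..m}"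
  have inj: "inj_on (shift_above k x) A" for A using inj_shift_above[OF k] by (rule inj_on_subset) simp
  have LS1: "label_mset S1 = mset_set ?A"
    unfolding S1_def using label_mset_relab[OF w1 inj] L1 inj by (simp add: image_mset_mset_set)
  have "(\<lambda>y. y + (x - 1)) ` {1..k} = {1 + (x - 1)..k + (x - 1)}"
    by (rule image_add_atLeastAtMost')
  also have "\<dots> = {x..x + k - 1}" using assms(3) by (simp add: ac_simps)
  finally have LS2: "label_mset S2 = mset_set {x..x + k - 1}"
    unfolding S2_def using label_mset_relab[OF w2, of "\<lambda>y. y + (x - 1)"] L2
    by (simp add: image_mset_mset_set inj_on_def)
  have A: "?A = {1..x} \<union> {x + k..m + k - 1}" using image_shift_above_across[OF k assms(3,4)] .
  then have xA: "x \<in> ?A" using assms(3) by auto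
  then show "count (label_mset S1) x = 1" unfolding LS1 by simp
  show "label_union S2 = {x..x + k - 1}" using ws2 LS2 by (simp add: label_union_eq_set_label_mset)
  have disj: "?A \<inter> {x..x + k - 1} \<subseteq> {x}" unfolding A using k by auto
  then show "label_union S1 \<inter> label_union S2 \<subseteq> {x}"
    using ws1 ws2 LS1 LS2 by (simp add: label_union_eq_set_label_mset)
  have "mset_set ?A - {#x#} + mset_set {x..x + k - 1} = mset_set (?A - {x}) + mset_set {x..x + k - 1}"
    using xA by (simp add: mset_set_Diff)
  also have "\<dots> = mset_set ((?A - {x}) \<union> {x..x + k - 1})"
    using disj by (intro mset_set_Union[symmetric]) auto
  also have "(?A - {x}) \<union> {x..x + k - 1} = {1..m + k - 1}"
    unfolding A using k assms(3,4) by auto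
  finally show "label_mset S1 - {#x#} + label_mset S2 = mset_set {1..m + k - 1}"
    unfolding LS1 LS2 .
qed

lemma RW_comp:
  assumes "RW m T1" "RW k T2" "1 \<le> x" "x \<le> m"
  shows "RW (m + k - 1) (comp k x T1 T2)"
  using comp_graft_conditions[OF assms] wf_rwt_graft label_mset_graft
  unfolding RW_iff comp_eq_graft[OF assms(3)] by auto

lemma recursively_labelled_comp:
  assumes "RW m T1" "RW k T2" "1 \<le> x" "x \<le> m"
    and "recursively_labelled T1" "recursively_labelled T2"
  shows "recursively_labelled (comp k x T1 T2)"
proof -
  note conds = comp_graft_conditions[OF assms(1-4)]
  have "k \<ge> 1" using assms(2) by (rule RW_imp_ge_1)
  then show ?thesis
    unfolding comp_eq_graft[OF assms(3)]
    using recursively_labelled_graft[OF conds(1,2) _ conds(3,4)] conds(5)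
      recursively_labelled_shift_up[OF assms(6)] intervals_after_subst_shift_above[OF _ assms(5)]
    by simp
qed

lemma generators_RW_recursively_labelled:
  "RW 1 (Node {1} {#}) \<and> recursively_labelled (Node {1} {#})"
  "RW 2 A_mu \<and> recursively_labelled A_mu"
  "RW 2 A_prec \<and> recursively_labelled A_prec"
  "RW 2 A_succ \<and> recursively_labelled A_succ"
  "RW 2 A_odot \<and> recursively_labelled A_odot"
proof -
  have two: "{1..2::nat} = {1, 2}" by auto
  then have "is_interval {Suc 0, 2}" by (metis One_nat_def is_interval_atLeastAtMost)
  with two show "RW 1 (Node {1} {#}) \<and> recursively_labelled (Node {1} {#})"
    "RW 2 A_mu \<and> recursively_labelled A_mu" "RW 2 A_prec \<and> recursively_labelled A_prec"
    "RW 2 A_succ \<and> recursively_labelled A_succ" "RW 2 A_odot \<and> recursively_labelled A_odot"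
    unfolding A_mu_def A_prec_def A_succ_def A_odot_def RW_iff by (simp_all add: insert_commute)
qed

lemma RWS_imp_RW_recursively_labelled: "RWS n T \<Longrightarrow> RW n T \<and> recursively_labelled T"
  by (induction rule: RWS.induct)
    (use generators_RW_recursively_labelled RW_comp recursively_labelled_comp in auto)

section \<open>Decomposition of recursively labelled trees\<close>

lemma RWS_comp_generator:
  "RWS 2 G \<Longrightarrow> RWS k T \<Longrightarrow> comp k 1 G T = T' \<Longrightarrow> RWS (k + 1) T'"
  using RWS.compose[of 2 G k T 1] by simp

lemma comp_eq_graft_if_labels_le:
  "1 \<le> x \<Longrightarrow> label_union T1 \<subseteq> {..x} \<Longrightarrow>
     comp k x T1 T2 = graft x (relab (\<lambda>y. y + (x - 1)) T2) T1"
  unfolding comp_eq_graft by (subst relab_ident[of T1]) (auto simp: shift_above_def)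

lemma comp_generator_eq:
  assumes "k \<ge> 1"
  shows "comp k 1 A_mu T = graft 1 T (Node {1, k + 1} {#})"
    and "comp k 1 A_prec T = graft 1 T (Node {1} {#Node {k + 1} {#}#})"
    and "comp k 1 A_succ T = graft 1 T (Node {k + 1} {#Node {1} {#}#})"
    and "comp k 1 A_odot T = graft 1 T (Node {} {#Node {1} {#}, Node {k + 1} {#}#})"
proof -
  have "relab (\<lambda>y. y + (1 - 1)) T = T" by (rule relab_ident) simp
  then show "comp k 1 A_mu T = graft 1 T (Node {1, k + 1} {#})"
    and "comp k 1 A_prec T = graft 1 T (Node {1} {#Node {k + 1} {#}#})"
    and "comp k 1 A_succ T = graft 1 T (Node {k + 1} {#Node {1} {#}#})"
    and "comp k 1 A_odot T = graft 1 T (Node {} {#Node {1} {#}, Node {k + 1} {#}#})"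
    using assms by (simp_all add: comp_eq_graft A_mu_def A_prec_def A_succ_def A_odot_def shift_above_def)
qed

lemma normalise_interval_tree:
  assumes "wf_rwt c" "recursively_labelled c" "label_mset c = mset_set {a..b}" "1 \<le> a" "a \<le> b"
  defines "c' \<equiv> relab (\<lambda>y. y - (a - 1)) c"
  shows "RW (b - a + 1) c'" "recursively_labelled c'" "relab (\<lambda>y. y + (a - 1)) c' = c"
proof -
  have lc: "label_union c = {a..b}"
    using assms(1,3) by (simp add: label_union_eq_set_label_mset)
  have inj: "inj_on (\<lambda>y. y - (a - 1)) (label_union c)" unfolding lc inj_on_def using assms(4) by auto
  have "(\<lambda>y. y - (a - 1)) ` {a..b} = {a - (a - 1)..b - (a - 1)}"
    using assms(4,5) by (intro image_minus_const_atLeastAtMost_nat) auto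
  also have "\<dots> = {1..b - a + 1}" using assms(4,5) by simp
  finally have "label_mset c' = mset_set {1..b - a + 1}"
    unfolding c'_def label_mset_relab[OF assms(1) inj] assms(3)
    using inj[unfolded lc] by (simp add: image_mset_mset_set)
  then show "RW (b - a + 1) c'" unfolding RW_iff c'_def using assms(1) wf_rwt_relab by blast
  show "recursively_labelled c'"
    unfolding c'_def using assms(2) by (rule recursively_labelled_shift_down) (use lc assms(4) in auto)
  show "relab (\<lambda>y. y + (a - 1)) c' = c"
    unfolding c'_def relab_relab by (rule relab_ident) (use lc assms(4) in auto)
qed

lemma RW_Node_of_partition:
  assumes "finite L" "L \<noteq> {} \<or> size cs \<ge> 2" "\<forall>c\<in>#cs. wf_rwt c \<and> recursively_labelled c"
    and "\<Sum>\<^sub># (image_mset label_mset cs) = mset_set R" "L \<inter> R = {}" "L \<union> R = {1..m}"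
  shows "RW m (Node L cs)" "recursively_labelled (Node L cs)"
proof -
  have "finite R" using assms(6) by (metis finite_Un finite_atLeastAtMost)
  then have "label_mset (Node L cs) = mset_set (L \<union> R)"
    using assms(1,4,5) by (simp add: mset_set_Union)
  then have LM: "label_mset (Node L cs) = mset_set {1..m}" using assms(6) by simp
  have wf: "wf_rwt (Node L cs)" using assms(1-3) by auto
  with LM show "RW m (Node L cs)" unfolding RW_iff by blast
  have "label_union (Node L cs) = {1..m}"
    unfolding label_union_eq_set_label_mset[OF wf] LM by simp
  with assms(3) show "recursively_labelled (Node L cs)"
    using recursively_labelled_iff[of "Node L cs"] by (simp del: label_union.simps)
qed

lemma RWS_graft_at_top:
  assumes "RWS m T1" "RWS k T2" "graft m (relab (\<lambda>y. y + (m - 1)) T2) T1 = T"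
  shows "RWS (m + k - 1) T"
proof -
  have RW: "RW m T1" using RWS_imp_RW_recursively_labelled[OF assms(1)] ..
  then have m: "1 \<le> m" by (rule RW_imp_ge_1)
  from RW have "label_union T1 = {1..m}" by (simp add: RW_iff label_union_eq_set_label_mset)
  then have "comp k m T1 T2 = T" using assms(3) comp_eq_graft_if_labels_le[OF m] by simp
  with RWS.compose[OF assms(1,2) m order_refl] show ?thesis by simp
qed

locale rws_induction_step =
  fixes n :: nat and L :: "nat set" and cs :: "rwt multiset"
  assumes IH: "\<And>m T. m < n \<Longrightarrow> RW m T \<Longrightarrow> recursively_labelled T \<Longrightarrow> RWS m T"
    and RW_root: "RW n (Node L cs)" and recursively_labelled_root: "recursively_labelled (Node L cs)"
    and n_ge_2: "n \<ge> 2"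
begin

lemma wf_root: "wf_rwt (Node L cs)" and label_mset_root: "label_mset (Node L cs) = mset_set {1..n}"
  using RW_root unfolding RW_iff by auto

lemma finite_root_labels: "finite L"
  and wf_children: "\<forall>c\<in>#cs. wf_rwt c"
  and recursively_labelled_children: "\<forall>c\<in>#cs. recursively_labelled c"
  and size_children_if_unlabelled: "L = {} \<Longrightarrow> size cs \<ge> 2"
  using wf_root recursively_labelled_root by auto

lemma RWS_smaller:
  assumes "m < n" "wf_rwt T" "label_mset T = mset_set {1..m}"
    and "\<forall>c\<in>#root_children T. recursively_labelled c"
  shows "RWS m T"
proof (rule IH[OF assms(1)])
  show "RW m T" using assms(2,3) unfolding RW_iff by simp
  have "label_union T = {1..m}" using assms(2,3) by (simp add: label_union_eq_set_label_mset)
  with assms(4) show "recursively_labelled T" by (simp add: recursively_labelled_iff[of T])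
qed

lemma obtain_child_interval:
  assumes "y \<in> {1..n}" "y \<notin> L"
  obtains c rest a b R where "cs = add_mset c rest" "wf_rwt c" "recursively_labelled c"
    and "label_mset c = mset_set {a..b}" "a \<le> y" "y \<le> b" "1 \<le> a" "b \<le> n"
    and "\<forall>d\<in>#rest. wf_rwt d \<and> recursively_labelled d"
    and "\<Sum>\<^sub># (image_mset label_mset rest) = mset_set R" "L \<inter> R = {}" "L \<union> R = {1..n} - {a..b}"
proof -
  have "y \<in># label_mset (Node L cs)" unfolding label_mset_root using assms(1) by simp
  then have "y \<in> label_union (Node L cs)" using label_union_eq_set_label_mset[OF wf_root] by blast
  then obtain c rest where cs: "cs = add_mset c rest" and yc: "y \<in> label_union c"
    using assms(2) by (rule obtain_child_containing_label)
  note split = label_sets_of_child_split[OF wf_root label_mset_root finite_atLeastAtMost cs]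
  have wc: "wf_rwt c" "recursively_labelled c" and rest: "\<forall>d\<in>#rest. wf_rwt d \<and> recursively_labelled d"
    using cs wf_children recursively_labelled_children by auto
  from wc(2) obtain a b where ab: "label_union c = {a..b}"
    unfolding recursively_labelled_iff[of c] is_interval_def by blast
  have "a \<in> label_union c" "b \<in> label_union c" using ab yc by auto
  then have "a \<in> {1..n}" "b \<in> {1..n}" using split(6) by blast+
  show thesis
  proof (rule that[OF cs wc _ _ _ _ _ rest split(2,4)])
    show "label_mset c = mset_set {a..b}" using split(1) ab by simp
    show "a \<le> y" "y \<le> b" using ab yc by auto
    show "1 \<le> a" "b \<le> n" using \<open>a \<in> {1..n}\<close> \<open>b \<in> {1..n}\<close> by auto
    show "L \<union> \<Union> (label_union ` set_mset rest) = {1..n} - {a..b}"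
      using split(3,5,6) unfolding ab by blast
  qed
qed

lemma RWS_if_top_labels_in_root:
  assumes "n \<in> L" "n - 1 \<in> L"
  shows "RWS n (Node L cs)"
proof -
  define T1 where "T1 = Node (L - {n}) cs"
  have "n - 1 < n" using n_ge_2 by simp
  have wT1: "wf_rwt T1"
    unfolding T1_def using finite_root_labels wf_children assms(2) n_ge_2 by auto
  have "label_mset T1 = label_mset (Node L cs) - {#n#}"
    unfolding T1_def using finite_root_labels assms(1) by (simp add: mset_set.remove)
  also have "\<dots> = mset_set ({1..n} - {n})"
    unfolding label_mset_root using n_ge_2 by (simp add: mset_set_Diff)
  also have "{1..n} - {n} = {1..n - 1}" using n_ge_2 by auto
  finally have "label_mset T1 = mset_set {1..n - 1}" .
  then have T1: "RWS (n - 1) T1"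
    using RWS_smaller[OF \<open>n - 1 < n\<close> wT1] recursively_labelled_children unfolding T1_def by simp
  have mu: "relab (\<lambda>y. y + (n - 1 - 1)) A_mu = Node {n - 1, n} {#}"
    using n_ge_2 by (simp add: A_mu_def)
  have "L - {n} - {n - 1} \<union> {n - 1, n} = L" using assms by auto
  moreover have "n - 1 \<in> L - {n}" using assms(2) n_ge_2 by auto
  ultimately have "graft (n - 1) (Node {n - 1, n} {#}) T1 = Node L cs"
    unfolding T1_def by simp
  then show ?thesis using RWS_graft_at_top[OF T1 RWS.mu, unfolded mu] n_ge_2 by simp
qed

lemma RWS_if_top_label_in_root_over_single_child:
  assumes "L = {n}" "cs = {#c#}" "RW (n - 1) c" "recursively_labelled c"
  shows "RWS n (Node L cs)"
proof -
  have x: "n - 1 < n" "n - 1 \<ge> 1" and arity: "n - 1 + 1 = n" using n_ge_2 by auto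
  have c: "RWS (n - 1) c" using IH[OF x(1) assms(3,4)] .
  note gen = comp_generator_eq[OF x(2)]
  show ?thesis
  proof (cases "red c")
    case True
    have "{1, n} \<noteq> {1}" "{1, n} - {1} = {n}" using n_ge_2 by auto
    then have "comp (n - 1) 1 A_mu c = Node L cs" using gen(1) True assms(1,2) n_ge_2 by simp
    then have "RWS (n - 1 + 1) (Node L cs)" by (rule RWS_comp_generator[OF RWS.mu c])
    then show ?thesis unfolding arity .
  next
    case False
    then have "graft 1 c (Node {1} {#}) = c" by (cases c) simp
    then have "comp (n - 1) 1 A_succ c = Node L cs" using gen(3) False assms(1,2) n_ge_2 by simp
    then have "RWS (n - 1 + 1) (Node L cs)" by (rule RWS_comp_generator[OF RWS.succ c])
    then show ?thesis unfolding arity .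
  qed
qed

lemma RWS_if_top_leaf_beside_tree:
  assumes "cs = add_mset (Node {n} {#}) rest" "RW (n - 1) (Node L rest)"
    and "recursively_labelled (Node L rest)"
  shows "RWS n (Node L cs)"
proof -
  have x: "n - 1 < n" "n - 1 \<ge> 1" and arity: "n - 1 + 1 = n" using n_ge_2 by auto
  have D: "RWS (n - 1) (Node L rest)" using IH[OF x(1) assms(2,3)] .
  note gen = comp_generator_eq[OF x(2)]
  show ?thesis
  proof (cases "red (Node L rest)")
    case True
    then have "comp (n - 1) 1 A_odot (Node L rest) = Node L cs"
      using gen(4) assms(1) n_ge_2 by (simp add: add_mset_commute)
    then have "RWS (n - 1 + 1) (Node L cs)" by (rule RWS_comp_generator[OF RWS.odot D])
    then show ?thesis unfolding arity .
  next
    case False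
    then have "comp (n - 1) 1 A_prec (Node L rest) = Node L cs"
      using gen(2) assms(1) n_ge_2 by simp
    then have "RWS (n - 1 + 1) (Node L cs)" by (rule RWS_comp_generator[OF RWS.prec D])
    then show ?thesis unfolding arity .
  qed
qed

lemma RWS_if_top_leaf_beside_single_tree:
  assumes "L = {}" "cs = {#Node {n} {#}, d#}" "RW (n - 1) d" "recursively_labelled d"
  shows "RWS n (Node L cs)"
proof -
  have x: "n - 1 < n" "n - 1 \<ge> 1" and arity: "n - 1 + 1 = n" using n_ge_2 by auto
  have d: "RWS (n - 1) d" using IH[OF x(1) assms(3,4)] .
  note gen = comp_generator_eq[OF x(2)]
  show ?thesis
  proof (cases "red d")
    case True
    then have "comp (n - 1) 1 A_prec d = Node L cs" using gen(2) assms(1,2) n_ge_2 by simp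
    then have "RWS (n - 1 + 1) (Node L cs)" by (rule RWS_comp_generator[OF RWS.prec d])
    then show ?thesis unfolding arity .
  next
    case False
    then have "graft 1 d (Node {1} {#}) = d" by (cases d) simp
    then have "comp (n - 1) 1 A_odot d = Node L cs"
      using gen(4) False assms(1,2) n_ge_2 by (simp add: add_mset_commute)
    then have "RWS (n - 1 + 1) (Node L cs)" by (rule RWS_comp_generator[OF RWS.odot d])
    then show ?thesis unfolding arity .
  qed
qed

lemma RWS_if_top_label_in_root_above_child:
  assumes "n \<in> L" "a \<notin> L" "2 \<le> a" "cs = add_mset c rest"
    and "RW a (Node (insert a (L - {n})) rest)" "recursively_labelled (Node (insert a (L - {n})) rest)"
    and "RW (n - a) c'" "recursively_labelled c'" "relab (\<lambda>y. y + (a - 1)) c' = c"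
  shows "RWS n (Node L cs)"
proof -
  have "n - a \<ge> 1" using assms(7) by (rule RW_imp_ge_1)
  then have arity: "a < n" "n - a + 1 < n" "a + (n - a + 1) - 1 = n" using assms(3) by auto
  have "label_mset c' = mset_set {1..n - a}" using assms(7) by (simp add: RW_iff)
  moreover have "insert (n - a + 1) {1..n - a} = {1..n - a + 1}" by auto
  ultimately have "RW (n - a + 1) (Node {n - a + 1} {#c'#})"
    "recursively_labelled (Node {n - a + 1} {#c'#})"
    using assms(7,8) by (intro RW_Node_of_partition[where R = "{1..n - a}" and m = "n - a + 1"]; simp add: RW_iff)+
  then have T2: "RWS (n - a + 1) (Node {n - a + 1} {#c'#})" using IH[OF arity(2)] by blast
  have T1: "RWS a (Node (insert a (L - {n})) rest)" using IH[OF arity(1) assms(5,6)] .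
  have "relab (\<lambda>y. y + (a - 1)) (Node {n - a + 1} {#c'#}) = Node {n} {#c#}"
    using assms(3,9) arity(1) by simp
  moreover have "insert a (L - {n}) - {a} \<union> {n} = L" using assms(1,2) by auto
  ultimately have "graft a (relab (\<lambda>y. y + (a - 1)) (Node {n - a + 1} {#c'#}))
      (Node (insert a (L - {n})) rest) = Node L cs"
    using assms(4) by simp
  from RWS_graft_at_top[OF T1 T2 this] show ?thesis by (simp only: arity)
qed

lemma RWS_if_top_label_in_root_not_next:
  assumes "n \<in> L" "n - 1 \<notin> L"
  shows "RWS n (Node L cs)"
proof -
  have "n - 1 \<in> {1..n}" using n_ge_2 by auto
  then obtain c rest a b R where cs: "cs = add_mset c rest" and c: "wf_rwt c" "recursively_labelled c"
    and lc: "label_mset c = mset_set {a..b}" "a \<le> n - 1" "n - 1 \<le> b" "1 \<le> a" "b \<le> n"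
    and rest: "\<forall>d\<in>#rest. wf_rwt d \<and> recursively_labelled d"
    and R: "\<Sum>\<^sub># (image_mset label_mset rest) = mset_set R" "L \<inter> R = {}" "L \<union> R = {1..n} - {a..b}"
    using assms(2) by (rule obtain_child_interval)
  have "n \<notin> {a..b}" using R(3) assms(1) by blast
  then have b: "b = n - 1" using lc(2,3,5) by auto
  then have "{1..n} - {a..b} = insert n {1..a - 1}" using lc(2,4) by auto
  then have LR: "L \<union> R = insert n {1..a - 1}" using R(3) by simp
  show ?thesis
  proof (cases "a = 1")
    case True
    then have "L = {n}" "R = {}" using LR R(2) assms(1) by auto
    then have "rest = {#}" using R(1) rest label_mset_nonempty by (cases rest) auto
    show ?thesis
    proof (rule RWS_if_top_label_in_root_over_single_child)
      show "cs = {#c#}" using cs \<open>rest = {#}\<close> by simp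
      show "RW (n - 1) c" using c(1) lc(1) True b by (simp add: RW_iff)
    qed fact+
  next
    case False
    then have "a \<ge> 2" using lc(4) by simp
    have "n \<notin> R" using R(2) assms(1) by auto
    then have "(L - {n}) \<union> R = {1..a - 1}" using LR lc(2) by auto
    moreover have "a \<notin> insert n {1..a - 1}" using lc(2,4) n_ge_2 by auto
    then have "a \<notin> L" "a \<notin> R" unfolding LR[symmetric] by auto
    ultimately have "insert a (L - {n}) \<union> R = {1..a}" "insert a (L - {n}) \<inter> R = {}"
      using lc(4) R(2) by auto
    then have "RW a (Node (insert a (L - {n})) rest)"
      "recursively_labelled (Node (insert a (L - {n})) rest)"
      using R(1) finite_root_labels rest by (intro RW_Node_of_partition[where R = R and m = a]; simp)+
    moreover note normalise_interval_tree[OF c lc(1)[unfolded b] lc(4,2)]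
    moreover have "n - 1 - a + 1 = n - a" using lc(2) n_ge_2 by linarith
    ultimately show ?thesis
      using RWS_if_top_label_in_root_above_child[OF assms(1) \<open>a \<notin> L\<close> \<open>a \<ge> 2\<close> cs] b by simp
  qed
qed

lemma RWS_if_top_label_in_red_child:
  assumes "a \<notin> L" "2 \<le> a" "a < n" "cs = add_mset c rest" "red c" "L \<noteq> {} \<or> rest \<noteq> {#}"
    and "RW a (Node (insert a L) rest)" "recursively_labelled (Node (insert a L) rest)"
    and "RW (n - a + 1) c'" "recursively_labelled c'" "relab (\<lambda>y. y + (a - 1)) c' = c"
  shows "RWS n (Node L cs)"
proof -
  have arity: "n - a + 1 < n" "a + (n - a + 1) - 1 = n" using assms(2,3) by auto
  have "graft a c (Node (insert a L) rest) = Node L cs"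
    using assms(1,4,5,6) by (auto simp: insert_Diff_if)
  then have "graft a (relab (\<lambda>y. y + (a - 1)) c') (Node (insert a L) rest) = Node L cs"
    unfolding assms(11) .
  from RWS_graft_at_top[OF IH[OF assms(3,7,8)] IH[OF arity(1) assms(9,10)] this] show ?thesis
    by (simp only: arity)
qed

lemma RWS_if_top_label_in_white_child:
  assumes "a \<notin> L" "2 \<le> a" "a < n" "cs = add_mset c rest" "\<not> red c"
    and "\<forall>d\<in>#rest. a \<notin> label_union d"
    and "RW a (Node L (add_mset (Node {a} {#}) rest))"
    and "recursively_labelled (Node L (add_mset (Node {a} {#}) rest))"
    and "RW (n - a + 1) c'" "recursively_labelled c'" "relab (\<lambda>y. y + (a - 1)) c' = c"
  shows "RWS n (Node L cs)"
proof -
  have arity: "n - a + 1 < n" "a + (n - a + 1) - 1 = n" using assms(2,3) by auto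
  have "graft a c (Node {a} {#}) = c" using assms(5) by (cases c) simp
  then have "graft a c (Node L (add_mset (Node {a} {#}) rest)) = Node L cs"
    using assms(1,4,5) graft_mset_unchanged[OF assms(6)] by simp
  then have "graft a (relab (\<lambda>y. y + (a - 1)) c') (Node L (add_mset (Node {a} {#}) rest)) = Node L cs"
    unfolding assms(11) .
  from RWS_graft_at_top[OF IH[OF assms(3,7,8)] IH[OF arity(1) assms(9,10)] this] show ?thesis
    by (simp only: arity)
qed

lemma RWS_if_top_leaf:
  assumes "cs = add_mset (Node {n} {#}) rest" "\<forall>d\<in>#rest. wf_rwt d \<and> recursively_labelled d"
    and "\<Sum>\<^sub># (image_mset label_mset rest) = mset_set R" "L \<inter> R = {}" "L \<union> R = {1..n - 1}"
  shows "RWS n (Node L cs)"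
proof (cases "L \<noteq> {} \<or> size rest \<ge> 2")
  case True
  then show ?thesis
    using RWS_if_top_leaf_beside_tree[OF assms(1)] RW_Node_of_partition[OF _ True assms(2-5)]
      finite_root_labels by blast
next
  case False
  then have "L = {}" "size rest < 2" by auto
  moreover have "rest \<noteq> {#}"
    using assms(3,5) \<open>L = {}\<close> n_ge_2 by (auto simp: mset_set_empty_iff)
  ultimately obtain d where d: "rest = {#d#}"
    by (metis One_nat_def less_2_cases size_1_singleton_mset size_eq_0_iff_empty)
  then have "RW (n - 1) d" "recursively_labelled d"
    using assms(2,3,5) \<open>L = {}\<close> by (auto simp: RW_iff)
  then show ?thesis
    using RWS_if_top_leaf_beside_single_tree \<open>L = {}\<close> assms(1) d by (simp add: add_mset_commute)
qed

lemma RWS_if_top_label_in_child_interval: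
  assumes "cs = add_mset c rest" "wf_rwt c" "recursively_labelled c"
    and "\<forall>d\<in>#rest. wf_rwt d \<and> recursively_labelled d"
    and "label_mset c = mset_set {a..n}" "2 \<le> a" "a < n"
    and "\<Sum>\<^sub># (image_mset label_mset rest) = mset_set R" "L \<inter> R = {}" "L \<union> R = {1..a - 1}"
  shows "RWS n (Node L cs)"
proof -
  have "L \<noteq> {} \<or> rest \<noteq> {#}" using size_children_if_unlabelled assms(1) by auto
  have "finite R" using assms(10) by (metis finite_Un finite_atLeastAtMost)
  then have "\<Union> (label_union ` set_mset rest) = R"
    using set_sum_label_mset[of rest] assms(4,8) by simp
  moreover have "a \<notin> L \<union> R" unfolding assms(10) using assms(6) by simp
  ultimately have a: "a \<notin> L" "a \<notin> R" "\<forall>d\<in>#rest. a \<notin> label_union d" by auto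
  have "1 \<le> a" "a \<le> n" using assms(6,7) by auto
  note c' = normalise_interval_tree[OF assms(2,3,5) this]
  note a_le = \<open>a \<ge> 2\<close> \<open>a < n\<close>
  show ?thesis
  proof (cases "red c")
    case True
    have "RW a (Node (insert a L) rest)" "recursively_labelled (Node (insert a L) rest)"
      using finite_root_labels assms(4,6,8,9,10) a
      by (intro RW_Node_of_partition[where R = R and m = a]; auto)+
    with c' show ?thesis
      by (intro RWS_if_top_label_in_red_child[OF a(1) a_le assms(1) True \<open>L \<noteq> {} \<or> rest \<noteq> {#}\<close>])
  next
    case False
    have "\<Sum>\<^sub># (image_mset label_mset (add_mset (Node {a} {#}) rest)) = mset_set (insert a R)"
      using assms(8) a \<open>finite R\<close> by simp
    moreover have "L \<noteq> {} \<or> size (add_mset (Node {a} {#}) rest) \<ge> 2"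
      using \<open>L \<noteq> {} \<or> rest \<noteq> {#}\<close> by (auto simp: Suc_le_eq nonempty_has_size)
    ultimately have "RW a (Node L (add_mset (Node {a} {#}) rest))"
      "recursively_labelled (Node L (add_mset (Node {a} {#}) rest))"
      using finite_root_labels assms(4,6,9,10) a
      by (intro RW_Node_of_partition[where R = "insert a R" and m = a]; auto)+
    with c' show ?thesis by (intro RWS_if_top_label_in_white_child[OF a(1) a_le assms(1) False a(3)])
  qed
qed

lemma RWS_if_top_label_in_child:
  assumes "n \<notin> L"
  shows "RWS n (Node L cs)"
proof -
  have "n \<in> {1..n}" using n_ge_2 by auto
  then obtain c rest a b R where cs: "cs = add_mset c rest" and c: "wf_rwt c" "recursively_labelled c"
    and lc: "label_mset c = mset_set {a..b}" "a \<le> n" "n \<le> b" "1 \<le> a" "b \<le> n"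
    and rest: "\<forall>d\<in>#rest. wf_rwt d \<and> recursively_labelled d"
    and R: "\<Sum>\<^sub># (image_mset label_mset rest) = mset_set R" "L \<inter> R = {}" "L \<union> R = {1..n} - {a..b}"
    using assms by (rule obtain_child_interval)
  have b: "b = n" using lc(3,5) by simp
  then have "{1..n} - {a..b} = {1..a - 1}" using lc(2) by auto
  then have LR: "L \<union> R = {1..a - 1}" using R(3) by simp
  show ?thesis
  proof (cases "a = n")
    case True
    then have "size (label_mset c) = 1" using lc(1) b by simp
    then obtain y where "c = Node {y} {#}" using leaf_if_size_label_mset_1[OF c(1)] by blast
    with True lc(1) b have "c = Node {n} {#}" by simp
    then show ?thesis using RWS_if_top_leaf[OF _ rest R(1,2)] cs LR True by simp
  next
    case False
    have "L \<noteq> {} \<or> rest \<noteq> {#}" using size_children_if_unlabelled cs by auto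
    moreover have "rest \<noteq> {#} \<Longrightarrow> R \<noteq> {}"
      using R(1) rest label_mset_nonempty by (auto dest!: multi_member_split)
    ultimately have "a \<noteq> 1" using LR by auto
    then show ?thesis
      using RWS_if_top_label_in_child_interval[OF cs c rest _ _ _ R(1,2) LR] lc b False by simp
  qed
qed

end

lemma RWS_if_RW_recursively_labelled: "RW n T \<Longrightarrow> recursively_labelled T \<Longrightarrow> RWS n T"
proof (induction n arbitrary: T rule: less_induct)
  case (less n T)
  obtain L cs where T: "T = Node L cs" by (cases T)
  consider "n = 1" | "n \<ge> 2" using RW_imp_ge_1[OF less.prems(1)] by linarith
  then show ?case
  proof cases
    case 1
    with less.prems(1) have "wf_rwt T" "label_mset T = {#1#}" by (auto simp: RW_iff)
    then have "T = Node {1} {#}" using leaf_if_size_label_mset_1 by fastforce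
    then show ?thesis using 1 RWS.unit by simp
  next
    case 2
    then interpret rws_induction_step n L cs using less unfolding T by unfold_locales auto
    show ?thesis
      unfolding T using RWS_if_top_labels_in_root RWS_if_top_label_in_root_not_next
        RWS_if_top_label_in_child by blast
  qed
qed

theorem mainTheorem6:
  fixes n :: nat and T :: rwt
  assumes "n \<ge> 1"
  shows "RWS n T \<longleftrightarrow> RW n T \<and> recursively_labelled T"
  using RWS_imp_RW_recursively_labelled RWS_if_RW_recursively_labelled by blast

end
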